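(* For any temporal graph $\mathcal G=(V,E,\lambda)$ with lifetime $T_{\max}$ and any parameters $\delta,k\in\mathbb N^+$, the witness complexity of $\mathcal G$ is at most $|E|$.
   Context: A temporal graph $\mathcal G=(V,E,\lambda)$ with lifetime $T_{\max}$ consists of a finite undirected static graph $(V,E)$ and a labeling $\lambda:E\to\{1,\dots,T_{\max}\}$; edge $e$ is present only at time $\lambda(e)$. Infection model with parameter $\delta$: a set of at most $k$ seed infections $S\subseteq V\times[0,T_{\max}]$ is given; a seed $(u,t)$ makes $u$ infected at time $t$; otherwise a susceptible node $u$ becomes infected at time $t$ iff some neighbour $v$ infectious at time $t$ has $\lambda(uv)=t$ (exactly one infector recorded if several exist). A node infected at time $t$ is infectious at times $t+1,\dots,t+\delta$ and resistant afterwards. The infection log records triples $(u,v,t)$ ($u$ infected $v$ at time $t$). A witnessing schedule of length $a$ for $\mathcal G$ is a sequence $S_1,\dots,S_a$ of seed sets of size at most $k$ such that after performing these rounds all labels of $\mathcal G$ are uniquely determined (among labelings of the known static graph) by the infection logs; the witness complexity is the length of a shortest witnessing schedule. *)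

theory Defs
  imports Main
begin

definition valid_labeling :: "'v set set \<Rightarrow> nat \<Rightarrow> ('v set \<Rightarrow> nat) \<Rightarrow> bool" where
  "valid_labeling E Tmax lam \<longleftrightarrow> (\<forall>e\<in>E. lam e \<in> {1..Tmax})"

definition temporal_graph :: "'v set \<Rightarrow> 'v set set \<Rightarrow> nat \<Rightarrow> ('v set \<Rightarrow> nat) \<Rightarrow> bool" where
  "temporal_graph V E Tmax lam \<longleftrightarrow> finite V
     \<and> (\<forall>e\<in>E. \<exists>u v. e = {u, v} \<and> u \<noteq> v \<and> u \<in> V \<and> v \<in> V)
     \<and> valid_labeling E Tmax lam"

text \<open>inf_hist ... t v = Some s iff v got infected at time s \<le> t (by a seed, or by
  an infectious neighbour across an edge present at time s); None otherwise.
  A node infected at time s is infectious exactly at times s+1 .. s+delta.\<close>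

fun inf_hist :: "'v set set \<Rightarrow> ('v set \<Rightarrow> nat) \<Rightarrow> nat \<Rightarrow> ('v \<times> nat) set \<Rightarrow> nat \<Rightarrow> 'v \<Rightarrow> nat option" where
  "inf_hist E lam \<delta> S 0 = (\<lambda>v. if (v, 0) \<in> S then Some 0 else None)"
| "inf_hist E lam \<delta> S (Suc t) =
     (let h = inf_hist E lam \<delta> S t in
      (\<lambda>v. case h v of
              Some s \<Rightarrow> Some s
            | None \<Rightarrow>
               (if (v, Suc t) \<in> S \<or>
                   (\<exists>w s. {w, v} \<in> E \<and> lam {w, v} = Suc t \<and> h w = Some s
                          \<and> s < Suc t \<and> Suc t \<le> s + \<delta>)
                then Some (Suc t) else None)))"

definition inf_time :: "'v set set \<Rightarrow> ('v set \<Rightarrow> nat) \<Rightarrow> nat \<Rightarrow> nat \<Rightarrow> ('v \<times> nat) set \<Rightarrow> 'v \<Rightarrow> nat option" where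
  "inf_time E lam \<delta> Tmax S = inf_hist E lam \<delta> S Tmax"

definition is_log :: "'v set set \<Rightarrow> ('v set \<Rightarrow> nat) \<Rightarrow> nat \<Rightarrow> nat \<Rightarrow> ('v \<times> nat) set \<Rightarrow> ('v \<times> 'v \<times> nat) set \<Rightarrow> bool" where
  "is_log E lam \<delta> Tmax S L \<longleftrightarrow>
     (\<forall>(u, v, t) \<in> L. inf_time E lam \<delta> Tmax S v = Some t \<and> (v, t) \<notin> S
        \<and> {u, v} \<in> E \<and> lam {u, v} = t
        \<and> (\<exists>s. inf_time E lam \<delta> Tmax S u = Some s \<and> s < t \<and> t \<le> s + \<delta>))
   \<and> (\<forall>v t. inf_time E lam \<delta> Tmax S v = Some t \<and> (v, t) \<notin> S \<longrightarrow> (\<exists>!u. (u, v, t) \<in> L))"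

definition seed_set :: "'v set \<Rightarrow> nat \<Rightarrow> nat \<Rightarrow> ('v \<times> nat) set \<Rightarrow> bool" where
  "seed_set V Tmax k S \<longleftrightarrow> S \<subseteq> V \<times> {0..Tmax} \<and> finite S \<and> card S \<le> k"

text \<open>A schedule is witnessing if, whatever logs were observed in the rounds,
  every labeling of the known static graph (with the same lifetime) that could
  have produced these logs agrees with lam on all edges.\<close>

definition witnessing :: "'v set \<Rightarrow> 'v set set \<Rightarrow> nat \<Rightarrow> ('v set \<Rightarrow> nat) \<Rightarrow> nat \<Rightarrow> nat \<Rightarrow> ('v \<times> nat) set list \<Rightarrow> bool" where
  "witnessing V E Tmax lam \<delta> k Ss \<longleftrightarrow>
     (\<forall>S \<in> set Ss. seed_set V Tmax k S)
   \<and> (\<forall>Ls lam'. length Ls = length Ss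
        \<and> (\<forall>i < length Ss. is_log E lam \<delta> Tmax (Ss ! i) (Ls ! i))
        \<and> valid_labeling E Tmax lam'
        \<and> (\<forall>i < length Ss. is_log E lam' \<delta> Tmax (Ss ! i) (Ls ! i))
        \<longrightarrow> (\<forall>e \<in> E. lam' e = lam e))"

definition witness_complexity :: "'v set \<Rightarrow> 'v set set \<Rightarrow> nat \<Rightarrow> ('v set \<Rightarrow> nat) \<Rightarrow> nat \<Rightarrow> nat \<Rightarrow> nat" where
  "witness_complexity V E Tmax lam \<delta> k =
     (LEAST a. \<exists>Ss. length Ss = a \<and> witnessing V E Tmax lam \<delta> k Ss)"

end

theory Submission
  imports Defs
begin

text \<open>Probe the edges one at a time. For an edge \<open>{u, v}\<close> with label \<open>t + 1\<close>, seed only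
  \<open>u\<close> at time \<open>t\<close>: then \<open>v\<close> is infected at time \<open>t + 1\<close>, and its infector must have been
  infected before \<open>t + 1\<close>, which only \<open>u\<close> is. So the log records \<open>(u, v, t + 1)\<close>, and any
  labeling consistent with that log gives \<open>{u, v}\<close> the label \<open>t + 1\<close>. One round per edge
  is thus a witnessing schedule.\<close>

lemma inf_hist_le: "inf_hist E lam d S n v = Some s \<Longrightarrow> s \<le> n"
proof (induction n arbitrary: v s)
  case 0
  then show ?case by (simp split: if_splits)
next
  case (Suc n)
  then show ?case
    by (auto simp: Let_def split: option.splits if_splits) (meson le_SucI)+
qed

lemma inf_hist_mono:
  assumes "inf_hist E lam d S n v = Some s" and "n \<le> m"
  shows "inf_hist E lam d S m v = Some s"
  using assms(2,1) by (induction m rule: dec_induct) (auto simp: Let_def)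

lemma inf_hist_seed_before:
  "inf_hist E lam d S n w = Some s \<Longrightarrow> (w, s) \<in> S \<or> (\<exists>(x, t) \<in> S. t < s)"
proof (induction n arbitrary: w s)
  case 0
  then show ?case by (simp split: if_splits)
next
  case (Suc n)
  show ?case
  proof (cases "inf_hist E lam d S n w")
    case None
    with Suc.prems have s: "s = Suc n"
      and "(w, Suc n) \<in> S \<or> (\<exists>x s'. inf_hist E lam d S n x = Some s' \<and> s' < Suc n)"
      by (auto simp: Let_def split: if_splits)
    then show ?thesis using Suc.IH by fastforce
  next
    case Some
    with Suc.prems show ?thesis using Suc.IH by (simp add: Let_def)
  qed
qed

lemma inf_hist_seed: "(u, t) \<in> S \<Longrightarrow> \<exists>s \<le> t. inf_hist E lam d S t u = Some s"
proof (cases t)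
  case (Suc n)
  assume "(u, t) \<in> S"
  with Suc show ?thesis
    by (cases "inf_hist E lam d S n u") (auto simp: Let_def dest: inf_hist_le)
qed simp

lemma inf_hist_transmit:
  assumes "inf_hist E lam d S t u = Some s" and "t < s + d"
    and "{u, v} \<in> E" and "lam {u, v} = Suc t"
  shows "\<exists>s' \<le> Suc t. inf_hist E lam d S (Suc t) v = Some s'"
proof (cases "inf_hist E lam d S t v")
  case None
  have "s < Suc t" using inf_hist_le[OF assms(1)] by simp
  with None assms show ?thesis by (auto simp: Let_def)
next
  case (Some s')
  then have "inf_hist E lam d S (Suc t) v = Some s'" by (simp add: Let_def)
  with inf_hist_le[OF Some] show ?thesis by auto
qed

lemma inf_hist_single_seed_before:
  "inf_hist E lam d {(u, t)} n w = Some s \<Longrightarrow> t < s \<or> (s = t \<and> w = u)"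
  using inf_hist_seed_before by fastforce

lemma inf_hist_single_seed_neighbour:
  assumes "{u, v} \<in> E" and "u \<noteq> v" and "lam {u, v} = Suc t" and "d > 0"
  shows "inf_hist E lam d {(u, t)} (Suc t) v = Some (Suc t)"
proof -
  obtain s where "s \<le> t" and s: "inf_hist E lam d {(u, t)} t u = Some s"
    using inf_hist_seed[of u t "{(u, t)}"] by blast
  then have "t < s + d" using inf_hist_single_seed_before[OF s] assms(4) by simp
  then obtain s' where "s' \<le> Suc t" and s': "inf_hist E lam d {(u, t)} (Suc t) v = Some s'"
    using inf_hist_transmit[OF s _ assms(1,3)] by blast
  with inf_hist_single_seed_before[OF s'] assms(2) show ?thesis by auto
qed

lemma is_log_single_seed_label:
  assumes "{u, v} \<in> E" and "u \<noteq> v" and "lam {u, v} = Suc t" and "d > 0"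
    and "Suc t \<le> Tmax"
    and L: "is_log E lam d Tmax {(u, t)} L" and L': "is_log E lam' d Tmax {(u, t)} L"
  shows "lam' {u, v} = Suc t"
proof -
  have "inf_time E lam d Tmax {(u, t)} v = Some (Suc t)"
    unfolding inf_time_def
    using inf_hist_mono[OF inf_hist_single_seed_neighbour[of u v E lam t d, OF assms(1-4)] assms(5)] .
  with L have "\<exists>!w. (w, v, Suc t) \<in> L"
    unfolding is_log_def by simp
  then obtain w where w: "(w, v, Suc t) \<in> L" by blast
  with L obtain s where "inf_time E lam d Tmax {(u, t)} w = Some s" and "s < Suc t"
    unfolding is_log_def by fastforce
  then have "w = u"
    using inf_hist_single_seed_before unfolding inf_time_def by fastforce
  with w L' show ?thesis
    unfolding is_log_def by fastforce
qed

definition edge_probe :: "('v set \<Rightarrow> nat) \<Rightarrow> 'v set \<Rightarrow> ('v \<times> nat) set" where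
  "edge_probe lam e = {(SOME u. u \<in> e, lam e - 1)}"

lemma doubleton_some_elem:
  assumes "e = {u, v}" and "u \<noteq> v"
  obtains w where "e = {SOME x. x \<in> e, w}" and "(SOME x. x \<in> e) \<noteq> w"
proof -
  have "u \<in> e" using assms(1) by simp
  then have "(SOME x. x \<in> e) \<in> e" by (rule someI)
  then consider "(SOME x. x \<in> e) = u" | "(SOME x. x \<in> e) = v" using assms(1) by blast
  then show ?thesis
  proof cases
    case 1
    then show ?thesis using assms that[of v] by simp
  next
    case 2
    then show ?thesis using assms that[of u] by (simp add: insert_commute)
  qed
qed

lemma seed_set_edge_probe:
  assumes "temporal_graph V E Tmax lam" and "k > 0" and "e \<in> E"
  shows "seed_set V Tmax k (edge_probe lam e)"
proof -
  obtain u v where "e = {u, v}" "u \<in> V" "v \<in> V"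
    using assms(1,3) by (auto simp: temporal_graph_def)
  then have "(SOME x. x \<in> e) \<in> V" by (auto intro: someI2)
  moreover have "lam e \<le> Tmax"
    using assms(1,3) by (auto simp: temporal_graph_def valid_labeling_def)
  ultimately show ?thesis
    using assms(2) by (simp add: edge_probe_def seed_set_def)
qed

lemma is_log_edge_probe_label:
  assumes "temporal_graph V E Tmax lam" and "\<delta> > 0" and "e \<in> E"
    and "is_log E lam \<delta> Tmax (edge_probe lam e) L"
    and "is_log E lam' \<delta> Tmax (edge_probe lam e) L"
  shows "lam' e = lam e"
proof -
  obtain t where t: "lam e = Suc t" "Suc t \<le> Tmax"
    using assms(1,3) by (cases "lam e") (auto simp: temporal_graph_def valid_labeling_def)
  obtain u v where "e = {u, v}" "u \<noteq> v"
    using assms(1,3) by (auto simp: temporal_graph_def)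
  then obtain w where w: "e = {SOME x. x \<in> e, w}" "(SOME x. x \<in> e) \<noteq> w"
    by (rule doubleton_some_elem)
  have "edge_probe lam e = {(SOME x. x \<in> e, t)}"
    by (simp add: edge_probe_def t)
  with is_log_single_seed_label[OF _ w(2) _ assms(2) t(2)] assms(3-5) t(1) w(1)
  show ?thesis by simp
qed

lemma witnessing_edge_probes:
  assumes "temporal_graph V E Tmax lam" and "\<delta> > 0" and "k > 0" and "set es = E"
  shows "witnessing V E Tmax lam \<delta> k (map (edge_probe lam) es)"
  unfolding witnessing_def
proof (intro conjI allI impI ballI)
  fix S
  assume "S \<in> set (map (edge_probe lam) es)"
  then show "seed_set V Tmax k S"
    using seed_set_edge_probe[OF assms(1,3)] assms(4) by auto
next
  fix Ls lam' e
  assume logs: "length Ls = length (map (edge_probe lam) es)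
    \<and> (\<forall>i < length (map (edge_probe lam) es).
          is_log E lam \<delta> Tmax (map (edge_probe lam) es ! i) (Ls ! i))
    \<and> valid_labeling E Tmax lam'
    \<and> (\<forall>i < length (map (edge_probe lam) es).
          is_log E lam' \<delta> Tmax (map (edge_probe lam) es ! i) (Ls ! i))"
    and e: "e \<in> E"
  then obtain i where "i < length es" and "es ! i = e"
    using assms(4) by (metis in_set_conv_nth)
  with logs show "lam' e = lam e"
    using is_log_edge_probe_label[OF assms(1,2) e] by auto
qed

lemma temporal_graph_finite_edges:
  assumes "temporal_graph V E Tmax lam"
  shows "finite E"
proof -
  have "E \<subseteq> Pow V" and "finite V"
    using assms unfolding temporal_graph_def by auto
  then show ?thesis by (meson finite_Pow_iff rev_finite_subset)
qed

theorem mainTheorem12: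
  fixes V :: "'v set" and E :: "'v set set" and lam :: "'v set \<Rightarrow> nat"
    and Tmax \<delta> k :: nat
  assumes "temporal_graph V E Tmax lam" and "\<delta> > 0" and "k > 0"
  shows "witness_complexity V E Tmax lam \<delta> k \<le> card E"
proof -
  obtain es where es: "set es = E" "distinct es"
    using finite_distinct_list[OF temporal_graph_finite_edges[OF assms(1)]] by blast
  have "witnessing V E Tmax lam \<delta> k (map (edge_probe lam) es)"
    using witnessing_edge_probes[OF assms es(1)] .
  moreover have "length (map (edge_probe lam) es) = card E"
    using es distinct_card by fastforce
  ultimately show ?thesis
    unfolding witness_complexity_def by (metis (mono_tags, lifting) Least_le)
qed

end
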